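(* For every $d\in\mathbb N$ there exists a constant $c(d)>0$ such that for every finite nonempty set $Q\subset\mathbb Z^d$, every measurable set $B\subset\mathbb T^d$ with $|B|\le c(d)2^{-4|Q|}|Q|^{-2}$, and every $f\in\mathcal T(Q)$, $$ \|f\|_{L_\infty(\mathbb T^d)}\le12\|f\|_{L_\infty(\mathbb T^d\setminus B)}. $$
   Context: $\mathbb T^d=[0,2\pi)^d$ (the $d$-dimensional torus), $|B|$ denotes the normalized Lebesgue measure $(2\pi)^{-d}\lambda(B)$ of $B$, and $|Q|$ is the cardinality of $Q$. $\mathcal T(Q)=\{f(\mathbf x)=\sum_{\mathbf k\in Q}c_{\mathbf k}e^{i(\mathbf k,\mathbf x)}: c_{\mathbf k}\in\mathbb C\}$. $\|f\|_{L_\infty(S)}=\sup_{\mathbf x\in S}|f(\mathbf x)|$. *)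

theory Defs
  imports "HOL-Analysis.Analysis"
begin

definition torus :: "(real^'n) set" where
  "torus = {x. \<forall>i. 0 \<le> x$i \<and> x$i < 2*pi}"

definition norm_meas :: "(real^'n) set \<Rightarrow> real" where
  "norm_meas B = measure lebesgue B / (2*pi) ^ CARD('n)"

definition kdot :: "int^'n \<Rightarrow> real^'n \<Rightarrow> real" where
  "kdot k x = (\<Sum>i\<in>UNIV. of_int (k$i) * x$i)"

definition trig_polys :: "(int^'n) set \<Rightarrow> (real^'n \<Rightarrow> complex) set" where
  "trig_polys Q = {f. \<exists>c. \<forall>x. f x = (\<Sum>k\<in>Q. c k * exp (\<i> * of_real (kdot k x)))}"

definition sup_norm_on :: "(real^'n) set \<Rightarrow> (real^'n \<Rightarrow> complex) \<Rightarrow> real" where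
  "sup_norm_on S f = (SUP x\<in>S. norm (f x))"

end

theory Submission
  imports Defs
begin

text \<open>Let S be the supremum of |f| on the torus and m = |Q|. The power g = f^m is again a
trigonometric polynomial, and its frequencies are sums of at most m elements of Q, so there are at
most 4^m of them. Take x with |f(x)| > S/2. By Cauchy-Schwarz and Parseval, |g(x)|^2 is at most 4^m
times the mean of |g|^2 over the torus, while |g|^2 \<le> S^(2m) everywhere; hence |g|^2 exceeds
|g(x)|^2 / (2 * 4^m) on a set of normalized measure greater than 1 / (2 * 16^m). A set B of smaller
measure cannot contain this set, and at its points outside B we get |f| > S/8. The argument gives
the constant 8 and does not need the factor |Q|^(-2) of the hypothesis.\<close>

lemma integral_exp_int_period:
  fixes j :: int
  shows "(\<integral>t. indicator {0..<2*pi} t *\<^sub>R exp (\<i> * of_real (of_int j * t)) \<partial>lborel)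
         = of_real (if j = 0 then 2*pi else 0)"
proof -
  let ?e = "\<lambda>t::real. exp (\<i> * of_real (of_int j * t))"
  have "set_integrable lborel {0..<2*pi} ?e"
    unfolding set_integrable_def
    by (rule integrableI_bounded_set_indicator[where B=1]) (auto simp: norm_exp_i_times)
  then have "(\<integral>t. indicator {0..<2*pi} t *\<^sub>R ?e t \<partial>lborel) = integral {0..<2*pi} ?e"
    using set_borel_integral_eq_integral(2) by (simp add: set_lebesgue_integral_def)
  also have "\<dots> = integral {0..2*pi} ?e"
    by (rule integral_spike_set; rule negligible_subset[OF negligible_sing[of "2*pi"]]) auto
  also have "\<dots> = of_real (if j = 0 then 2*pi else 0)"
  proof (cases "j = 0")
    case False
    let ?F = "\<lambda>t::real. ?e t / (\<i> * of_int j)"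
    have "(?e has_integral (?F (2*pi) - ?F 0)) {0..2*pi}"
    proof (rule fundamental_theorem_of_calculus)
      fix x :: real
      have "((\<lambda>z. exp (\<i> * of_int j * z) / (\<i> * of_int j)) has_field_derivative
              exp (\<i> * of_int j * of_real x)) (at (of_real x))"
        using False by (auto intro!: derivative_eq_intros simp: field_simps)
      from has_vector_derivative_real_field[OF this]
      show "(?F has_vector_derivative ?e x) (at x within {0..2*pi})"
        by (simp add: mult.assoc)
    qed simp
    moreover have "?e (2*pi) = 1"
      using exp_integer_2pi[of "of_int j"] by (simp add: mult_ac)
    ultimately show ?thesis
      using False by (simp add: integral_unique)
  qed (simp add: scaleR_conv_of_real)
  finally show ?thesis .
qed

lemma prod_Basis_vec:
  "(\<Prod>b\<in>(Basis :: (real^'n::finite) set). h b) = (\<Prod>i\<in>UNIV. h (axis i 1))"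
  by (simp add: Basis_vec_def UNION_singleton_eq_range prod.reindex axis_eq_axis inj_on_def)

lemma integral_lborel_prod_components:
  fixes F :: "'n::finite \<Rightarrow> real \<Rightarrow> 'b::{real_normed_field, banach, second_countable_topology}"
  assumes integrable: "\<And>i. integrable lborel (F i)"
  shows "(\<integral>x. (\<Prod>i\<in>UNIV. F i (x$i)) \<partial>(lborel :: (real^'n) measure))
       = (\<Prod>i\<in>UNIV. \<integral>t. F i t \<partial>lborel)"
proof -
  interpret product_sigma_finite "\<lambda>_::real^'n. lborel :: real measure" by standard
  have [measurable]: "F i \<in> borel_measurable borel" for i
    using borel_measurable_integrable[OF integrable] by simp
  have component: "(\<Sum>b\<in>Basis. f b *\<^sub>R b) $ i = f (axis i 1)"
    for f :: "real^'n \<Rightarrow> real" and i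
    by (simp add: cart_eq_inner_axis inner_sum_left inner_Basis
        if_distrib[of "\<lambda>t. f _ * t"] sum.delta cong: if_cong)
  have "(\<integral>x. (\<Prod>i\<in>UNIV. F i (x$i)) \<partial>(lborel :: (real^'n) measure))
      = (\<integral>f. (\<Prod>i\<in>UNIV. F i ((\<Sum>b\<in>Basis. f b *\<^sub>R b) $ i))
             \<partial>(\<Pi>\<^sub>M b\<in>Basis. lborel))"
    by (subst lborel_eq) (rule integral_distr; measurable)
  also have "\<dots> = (\<integral>f. (\<Prod>b\<in>Basis. F (axis_index b) (f b))
             \<partial>(\<Pi>\<^sub>M b\<in>(Basis :: (real^'n) set). lborel))"
    by (simp only: component) (simp add: prod_Basis_vec)
  also have "\<dots> = (\<Prod>b\<in>(Basis :: (real^'n) set). \<integral>t. F (axis_index b) t \<partial>lborel)"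
    by (rule product_integral_prod) (auto simp: integrable)
  also have "\<dots> = (\<Prod>i\<in>UNIV. \<integral>t. F i t \<partial>lborel)"
    by (simp add: prod_Basis_vec)
  finally show ?thesis .
qed

lemma torus_borel [measurable]: "(torus :: (real^'n::finite) set) \<in> sets borel"
proof -
  have "torus = (\<Inter>i. {x::real^'n. 0 \<le> x$i}) \<inter> (\<Inter>i. {x::real^'n. x$i < 2*pi})"
    by (auto simp: torus_def)
  also have "\<dots> \<in> sets borel"
    by measurable
  finally show ?thesis .
qed

lemma torus_subset_cbox: "(torus :: (real^'n::finite) set) \<subseteq> cbox 0 (\<chi> i. 2*pi)"
  by (auto simp: torus_def mem_box_cart less_imp_le)

lemma zero_in_torus: "0 \<in> torus"
  by (simp add: torus_def)

lemma emeasure_torus_finite: "emeasure lborel (torus :: (real^'n::finite) set) < \<infinity>"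
  by (rule le_less_trans[OF emeasure_mono[OF torus_subset_cbox] emeasure_lborel_cbox_finite]) simp

lemma fmeasurable_subset_torus:
  assumes "A \<in> sets borel" "A \<subseteq> (torus :: (real^'n::finite) set)"
  shows "A \<in> fmeasurable lborel"
  using assms le_less_trans[OF emeasure_mono[OF assms(2)] emeasure_torus_finite]
  by (auto simp: fmeasurable_def)

lemma sets_borel_torus_Collect:
  assumes "Measurable.pred borel P"
  shows "{x \<in> (torus :: (real^'n::finite) set). P x} \<in> sets borel"
proof -
  have "{x \<in> torus. P x} = torus \<inter> {x \<in> space borel. P x}"
    by auto
  also have "\<dots> \<in> sets borel"
    using assms by measurable
  finally show ?thesis .
qed

lemma integrable_indicator_torus:
  fixes h :: "real^'n::finite \<Rightarrow> 'b::{banach, second_countable_topology}"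
  assumes "h \<in> borel_measurable borel" "\<And>x. x \<in> torus \<Longrightarrow> norm (h x) \<le> B"
  shows "integrable lborel (\<lambda>x. indicator torus x *\<^sub>R h x)"
  by (rule integrableI_bounded_set_indicator[where B=B]) (use assms emeasure_torus_finite in auto)

lemma kdot_zero [simp]: "kdot 0 x = 0"
  by (simp add: kdot_def)

lemma kdot_diff: "kdot (k - l) x = kdot k x - kdot l x"
  by (simp add: kdot_def algebra_simps sum_subtractf)

lemma kdot_add: "kdot (k + l) x = kdot k x + kdot l x"
  by (simp add: kdot_def algebra_simps sum.distrib)

lemma borel_measurable_exp_kdot [measurable]:
  "(\<lambda>x. exp (\<i> * of_real (kdot k x))) \<in> borel_measurable borel"
  unfolding kdot_def by measurable

lemma integral_torus_exp_kdot:
  fixes k :: "int^'n::finite"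
  shows "(\<integral>x. indicator torus x *\<^sub>R exp (\<i> * of_real (kdot k x)) \<partial>lborel)
     = of_real (if k = 0 then (2*pi) ^ CARD('n) else 0)"
proof -
  define F where "F i t = indicator {0..<2*pi} t *\<^sub>R exp (\<i> * of_real (of_int (k$i) * t))" for i t
  have product: "indicator torus x *\<^sub>R exp (\<i> * of_real (kdot k x)) = (\<Prod>i\<in>UNIV. F i (x$i))"
    for x :: "real^'n"
  proof -
    have "(indicator torus x :: real) = (\<Prod>i\<in>UNIV. indicator {0..<2*pi} (x$i))"
      by (auto simp: torus_def indicator_def prod_eq_1_iff)
    moreover have "exp (\<i> * of_real (kdot k x))
        = (\<Prod>i\<in>UNIV. exp (\<i> * of_real (of_int (k$i) * x$i)))"
      by (simp add: kdot_def sum_distrib_left exp_sum)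
    ultimately show ?thesis
      by (simp add: F_def scaleR_conv_of_real prod.distrib)
  qed
  have integrable_F: "integrable lborel (F i)" for i
    unfolding F_def
    by (rule integrableI_bounded_set_indicator[where B=1]) (auto simp: norm_exp_i_times)
  have "(\<integral>x. indicator torus x *\<^sub>R exp (\<i> * of_real (kdot k x)) \<partial>lborel)
     = (\<Prod>i\<in>UNIV. \<integral>t. F i t \<partial>lborel)"
    by (simp only: product integral_lborel_prod_components[OF integrable_F])
  also have "\<dots> = (\<Prod>i\<in>UNIV. of_real (if k$i = 0 then 2*pi else 0))"
    unfolding F_def by (simp only: integral_exp_int_period)
  also have "\<dots> = of_real (if k = 0 then (2*pi) ^ CARD('n) else 0)"
    by (auto simp: vec_eq_iff)
  finally show ?thesis .
qed

lemma measure_torus: "measure lborel (torus :: (real^'n::finite) set) = (2*pi) ^ CARD('n)"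
proof -
  have "complex_of_real (measure lborel (torus :: (real^'n) set))
      = (\<integral>x. indicator torus x *\<^sub>R exp (\<i> * of_real (kdot (0 :: int^'n) x)) \<partial>lborel)"
    by (simp add: scaleR_conv_of_real)
  also have "\<dots> = complex_of_real ((2*pi) ^ CARD('n))"
    by (simp only: integral_torus_exp_kdot) simp
  finally show ?thesis
    by (simp only: of_real_eq_iff)
qed

lemma parseval_torus:
  fixes c :: "int^'n::finite \<Rightarrow> complex"
  assumes "finite K"
  shows "(\<integral>x. indicator torus x * (norm (\<Sum>k\<in>K. c k * exp (\<i> * of_real (kdot k x))))\<^sup>2
           \<partial>lborel)
       = (2*pi) ^ CARD('n) * (\<Sum>k\<in>K. (norm (c k))\<^sup>2)"
proof -
  define e where "e k x = exp (\<i> * of_real (kdot k x))" for k :: "int^'n" and x :: "real^'n"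
  have e_mult_cnj: "e k x * cnj (e l x) = e (k - l) x" for k l x
    by (simp add: e_def exp_cnj kdot_diff exp_diff[symmetric] exp_minus field_simps)
  have pointwise: "complex_of_real (indicator torus x * (norm (\<Sum>k\<in>K. c k * e k x))\<^sup>2)
      = (\<Sum>k\<in>K. \<Sum>l\<in>K. (c k * cnj (c l)) * (indicator torus x *\<^sub>R e (k - l) x))" for x
  proof -
    have "complex_of_real ((norm (\<Sum>k\<in>K. c k * e k x))\<^sup>2)
        = (\<Sum>k\<in>K. \<Sum>l\<in>K. (c k * cnj (c l)) * e (k - l) x)"
      unfolding complex_norm_square
      by (simp add: cnj_sum sum_product e_mult_cnj[symmetric] algebra_simps)
    then show ?thesis
      by (simp add: scaleR_conv_of_real sum_distrib_left algebra_simps)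
  qed
  have integrable: "integrable lborel (\<lambda>x. indicator torus x *\<^sub>R e k x)" for k
    by (rule integrable_indicator_torus[where B=1]) (auto simp: e_def norm_exp_i_times)
  have "complex_of_real (\<integral>x. indicator torus x * (norm (\<Sum>k\<in>K. c k * e k x))\<^sup>2 \<partial>lborel)
     = (\<Sum>k\<in>K. \<Sum>l\<in>K.
          (c k * cnj (c l)) * (\<integral>x. indicator torus x *\<^sub>R e (k - l) x \<partial>lborel))"
    by (simp only: integral_complex_of_real[symmetric] pointwise integrable
        Bochner_Integration.integral_sum Bochner_Integration.integrable_sum
        integrable_mult_right integral_mult_right_zero)
  also have "\<dots> = (\<Sum>k\<in>K. (c k * cnj (c k)) * (2*pi) ^ CARD('n))"
    unfolding e_def integral_torus_exp_kdot
    by (simp add: if_distrib sum.delta'[OF assms] cong: if_cong)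
  also have "\<dots> = complex_of_real ((2*pi) ^ CARD('n) * (\<Sum>k\<in>K. (norm (c k))\<^sup>2))"
    by (simp add: complex_norm_square[symmetric] sum_distrib_left sum_distrib_right mult_ac)
  finally show ?thesis
    unfolding e_def by (simp only: of_real_eq_iff)
qed

lemma trig_polys_borel_measurable:
  assumes "f \<in> trig_polys Q"
  shows "f \<in> borel_measurable borel"
proof -
  obtain c where "f = (\<lambda>x. \<Sum>k\<in>Q. c k * exp (\<i> * of_real (kdot k x)))"
    using assms by (auto simp: trig_polys_def)
  also have "\<dots> \<in> borel_measurable borel"
    by measurable
  finally show ?thesis .
qed

lemma norm_trig_sum_le:
  "norm (\<Sum>k\<in>K. c k * exp (\<i> * of_real (kdot k x))) \<le> (\<Sum>k\<in>K. norm (c k))"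
  using norm_sum[of "\<lambda>k. c k * exp (\<i> * of_real (kdot k x))" K]
  by (simp add: norm_mult norm_exp_i_times)

lemma trig_polys_bdd_above_norm:
  assumes "f \<in> trig_polys Q"
  shows "bdd_above ((\<lambda>x. norm (f x)) ` S)"
proof -
  obtain c where "\<And>x. f x = (\<Sum>k\<in>Q. c k * exp (\<i> * of_real (kdot k x)))"
    using assms by (auto simp: trig_polys_def)
  then show ?thesis
    using norm_trig_sum_le[where c=c and K=Q] by (intro bdd_aboveI2[where M = "\<Sum>k\<in>Q. norm (c k)"]) simp
qed

lemma trig_polys_mono:
  assumes "f \<in> trig_polys X" "X \<subseteq> Y" "finite Y"
  shows "f \<in> trig_polys Y"
proof -
  obtain c where c: "\<And>x. f x = (\<Sum>k\<in>X. c k * exp (\<i> * of_real (kdot k x)))"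
    using assms(1) by (auto simp: trig_polys_def)
  have "f x = (\<Sum>k\<in>Y. (if k \<in> X then c k else 0) * exp (\<i> * of_real (kdot k x)))" for x
    unfolding c by (rule sum.mono_neutral_cong_left[OF assms(3,2)]) auto
  then show ?thesis
    unfolding trig_polys_def by (intro CollectI exI[of _ "\<lambda>k. if k \<in> X then c k else 0"]) blast
qed

lemma trig_polys_mult:
  assumes "finite A" "finite B" "f \<in> trig_polys A" "g \<in> trig_polys B"
  shows "(\<lambda>x. f x * g x) \<in> trig_polys ((\<lambda>(a, b). a + b) ` (A \<times> B))"
proof -
  obtain c where c: "\<And>x. f x = (\<Sum>k\<in>A. c k * exp (\<i> * of_real (kdot k x)))"
    using assms(3) by (auto simp: trig_polys_def)
  obtain d where d: "\<And>x. g x = (\<Sum>k\<in>B. d k * exp (\<i> * of_real (kdot k x)))"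
    using assms(4) by (auto simp: trig_polys_def)
  let ?plus = "\<lambda>(a::int^'n, b). a + b"
  define e where "e s = (\<Sum>p\<in>{p \<in> A \<times> B. ?plus p = s}. c (fst p) * d (snd p))" for s
  have "f x * g x = (\<Sum>s\<in>?plus ` (A \<times> B). e s * exp (\<i> * of_real (kdot s x)))" for x
  proof -
    have "f x * g x
        = (\<Sum>p\<in>A \<times> B. c (fst p) * d (snd p) * exp (\<i> * of_real (kdot (?plus p) x)))"
      unfolding c d sum_product sum.cartesian_product
      by (intro sum.cong refl) (auto simp: kdot_add exp_add algebra_simps)
    also have "\<dots> = (\<Sum>s\<in>?plus ` (A \<times> B). \<Sum>p\<in>{p \<in> A \<times> B. ?plus p = s}.
                      c (fst p) * d (snd p) * exp (\<i> * of_real (kdot (?plus p) x)))"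
      by (rule sum.image_gen) (use assms in auto)
    also have "\<dots> = (\<Sum>s\<in>?plus ` (A \<times> B). e s * exp (\<i> * of_real (kdot s x)))"
      unfolding e_def sum_distrib_right by (intro sum.cong refl) auto
    finally show ?thesis .
  qed
  then show ?thesis
    unfolding trig_polys_def by blast
qed

definition bounded_sums :: "(int^'n) set \<Rightarrow> nat \<Rightarrow> (int^'n) set" where
  "bounded_sums Q N = (\<lambda>a. \<Sum>q\<in>Q. of_nat (a q) *s q) ` {a. sum a Q \<le> N}"

lemma zero_in_bounded_sums: "0 \<in> bounded_sums Q N"
  unfolding bounded_sums_def by (rule image_eqI[of _ _ "\<lambda>_. 0"]) auto

lemma bounded_sums_empty: "bounded_sums {} N = {0}"
  by (auto simp: bounded_sums_def)

lemma bounded_sums_zero: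
  assumes "finite Q"
  shows "bounded_sums Q 0 = {0}"
  using assms zero_in_bounded_sums[of Q 0] by (auto simp: bounded_sums_def)

lemma bounded_sums_add_subset:
  assumes "finite Q"
  shows "(\<lambda>(s, q). s + q) ` (bounded_sums Q N \<times> Q) \<subseteq> bounded_sums Q (Suc N)"
proof clarify
  fix s q assume "s \<in> bounded_sums Q N" and q: "q \<in> Q"
  then obtain a where a: "sum a Q \<le> N" and s: "s = (\<Sum>p\<in>Q. of_nat (a p) *s p)"
    unfolding bounded_sums_def by auto
  define a' where "a' p = a p + (if p = q then 1 else 0)" for p
  have "sum a' Q = sum a Q + 1"
    using q assms by (simp add: a'_def sum.distrib)
  moreover have "(\<Sum>p\<in>Q. of_nat (a' p) *s p) = s + q"
  proof -
    have "(\<Sum>p\<in>Q. of_nat (a' p) *s p) = (\<Sum>p\<in>Q. of_nat (a p) *s p + (if p = q then p else 0))"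
      by (intro sum.cong refl) (simp add: a'_def vector_sadd_rdistrib)
    then show ?thesis
      using q assms by (simp add: sum.distrib s)
  qed
  ultimately show "s + q \<in> bounded_sums Q (Suc N)"
    unfolding bounded_sums_def using a by (intro image_eqI[of _ _ a']) auto
qed

lemma bounded_sums_insert_subset:
  assumes "finite Q" "q \<notin> Q"
  shows "bounded_sums (insert q Q) N
           \<subseteq> (\<Union>j\<le>N. (\<lambda>s. of_nat j *s q + s) ` bounded_sums Q (N - j))"
proof
  fix s assume "s \<in> bounded_sums (insert q Q) N"
  then obtain a where a: "a q + sum a Q \<le> N"
    and s: "s = of_nat (a q) *s q + (\<Sum>p\<in>Q. of_nat (a p) *s p)"
    using assms unfolding bounded_sums_def by auto
  then have "(\<Sum>p\<in>Q. of_nat (a p) *s p) \<in> bounded_sums Q (N - a q)"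
    unfolding bounded_sums_def by auto
  with a s show "s \<in> (\<Union>j\<le>N. (\<lambda>s. of_nat j *s q + s) ` bounded_sums Q (N - j))"
    by (intro UN_I[of "a q"]) auto
qed

lemma card_bounded_sums:
  assumes "finite Q"
  shows "finite (bounded_sums Q N) \<and> card (bounded_sums Q N) \<le> 2 ^ (N + card Q)"
  using assms
proof (induction Q arbitrary: N rule: finite_induct)
  case empty
  then show ?case by (simp add: bounded_sums_empty)
next
  case (insert q Q)
  let ?U = "\<Union>j\<le>N. (\<lambda>s. of_nat j *s q + s) ` bounded_sums Q (N - j)"
  have "card ?U \<le> (\<Sum>j\<le>N. card ((\<lambda>s. of_nat j *s q + s) ` bounded_sums Q (N - j)))"
    by (rule card_UN_le) simp
  also have "\<dots> \<le> (\<Sum>j\<le>N. 2 ^ (N - j + card Q))"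
  proof (intro sum_mono order_trans[OF card_image_le])
    show "finite (bounded_sums Q (N - j))" "card (bounded_sums Q (N - j)) \<le> 2 ^ (N - j + card Q)" for j
      using insert.IH by blast+
  qed
  also have "\<dots> = 2 ^ card Q * (\<Sum>j\<le>N. 2 ^ (N - j))"
    unfolding sum_distrib_left by (intro sum.cong refl) (simp add: power_add[symmetric] add.commute)
  also have "(\<Sum>j\<le>N. 2 ^ (N - j)) = (2::nat) ^ Suc N - 1"
    using sum.nat_diff_reindex[of "\<lambda>i. (2::nat) ^ i" "Suc N"] sum_power2[of "Suc N"]
    by (simp add: lessThan_Suc_atMost atLeast0LessThan)
  also have "2 ^ card Q * (2 ^ Suc N - 1) \<le> (2::nat) ^ (N + card (insert q Q))"
    using insert.hyps by (simp add: power_add diff_mult_distrib2 mult_ac)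
  finally have "card ?U \<le> 2 ^ (N + card (insert q Q))" .
  moreover have "finite ?U"
    using insert.IH by blast
  ultimately show ?case
    using bounded_sums_insert_subset[OF insert.hyps] by (meson card_mono finite_subset order_trans)
qed

lemma trig_polys_power:
  assumes "finite Q" "f \<in> trig_polys Q"
  shows "(\<lambda>x. f x ^ N) \<in> trig_polys (bounded_sums Q N)"
proof (induction N)
  case 0
  then show ?case
    by (auto simp: bounded_sums_zero[OF assms(1)] trig_polys_def intro!: exI[of _ "\<lambda>_. 1"])
next
  case (Suc N)
  have "(\<lambda>x. f x ^ N * f x) \<in> trig_polys ((\<lambda>(s, q). s + q) ` (bounded_sums Q N \<times> Q))"
    using card_bounded_sums[OF assms(1)] by (intro trig_polys_mult Suc.IH assms) auto
  then have "(\<lambda>x. f x ^ N * f x) \<in> trig_polys (bounded_sums Q (Suc N))"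
    by (rule trig_polys_mono[OF _ bounded_sums_add_subset[OF assms(1)]])
      (simp add: card_bounded_sums[OF assms(1)])
  then show ?case
    by (simp add: mult.commute)
qed

lemma integral_le_superlevel_measure:
  fixes h :: "'a \<Rightarrow> real"
  assumes T: "T \<in> sets M" "emeasure M T < \<infinity>" and h [measurable]: "h \<in> borel_measurable M"
    and bounds: "\<And>x. x \<in> T \<Longrightarrow> 0 \<le> h x \<and> h x \<le> L" and "0 \<le> \<theta>"
  shows "(\<integral>x. indicator T x * h x \<partial>M)
           \<le> L * measure M {x \<in> T. \<theta> \<le> h x} + \<theta> * measure M T"
proof -
  let ?A = "{x \<in> T. \<theta> \<le> h x}"
  have "?A = T \<inter> {x \<in> space M. \<theta> \<le> h x}"
    using sets.sets_into_space[OF T(1)] by auto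
  also have "\<dots> \<in> sets M"
    using T(1) by measurable
  finally have A: "?A \<in> sets M" .
  have A_finite: "emeasure M ?A < \<infinity>"
    by (rule le_less_trans[OF emeasure_mono[OF _ T(1)] T(2)]) auto
  have "(\<integral>x. indicator T x * h x \<partial>M)
      \<le> (\<integral>x. L * indicator ?A x + \<theta> * indicator T x \<partial>M)"
  proof (rule integral_mono)
    show "integrable M (\<lambda>x. indicator T x * h x)"
      using integrableI_bounded_set_indicator[OF T(1) h T(2), of L] bounds by simp
    show "integrable M (\<lambda>x. L * indicator ?A x + \<theta> * indicator T x)"
      using A A_finite T by (simp add: integrable_real_indicator)
    show "indicator T x * h x \<le> L * indicator ?A x + \<theta> * indicator T x" for x
      using bounds[of x] \<open>0 \<le> \<theta>\<close> by (auto simp: indicator_def)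
  qed
  also have "\<dots> = L * measure M ?A + \<theta> * measure M T"
    using A A_finite T by (simp add: integrable_real_indicator)
  finally show ?thesis .
qed

lemma measure_less_imp_not_subset:
  assumes "A \<in> sets M" "B \<in> fmeasurable M" "measure M B < measure M A"
  shows "\<not> A \<subseteq> B"
  using measure_mono_fmeasurable[OF _ assms(1,2)] assms(3) by fastforce

lemma norm_le_sup_norm_on:
  assumes "x \<in> S" "bdd_above ((\<lambda>x. norm (f x)) ` S)"
  shows "norm (f x) \<le> sup_norm_on S f"
  unfolding sup_norm_on_def using assms by (rule cSUP_upper)

lemma sup_norm_on_nonneg:
  assumes "S \<noteq> {}" "bdd_above ((\<lambda>x. norm (f x)) ` S)"
  shows "0 \<le> sup_norm_on S f"
  using assms norm_le_sup_norm_on[of _ S f] by (meson ex_in_conv norm_ge_zero order_trans)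

lemma trig_polys_large_values:
  fixes g :: "real^'n::finite \<Rightarrow> complex" and M :: real
  assumes K: "finite K" "K \<noteq> {}" and g: "g \<in> trig_polys K"
    and bound: "\<And>y. y \<in> torus \<Longrightarrow> norm (g y) \<le> M"
  shows "(2*pi) ^ CARD('n) * (norm (g x))\<^sup>2
      \<le> 2 * real (card K) * M\<^sup>2 *
        measure lborel {y \<in> torus. (norm (g x))\<^sup>2 / (2 * real (card K)) \<le> (norm (g y))\<^sup>2}"
proof -
  obtain d where d: "\<And>y. g y = (\<Sum>k\<in>K. d k * exp (\<i> * of_real (kdot k y)))"
    using g by (auto simp: trig_polys_def)
  have [measurable]: "g \<in> borel_measurable borel"
    by (rule trig_polys_borel_measurable[OF g])
  define V where "V = (2*pi) ^ CARD('n)"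
  define P where "P = (norm (g x))\<^sup>2"
  define c where "c = real (card K)"
  have c: "c > 0"
    using K by (simp add: c_def card_gt_0_iff)
  define I where "I = (\<integral>y. indicator torus y * (norm (g y))\<^sup>2 \<partial>lborel)"
  have "P \<le> (\<Sum>k\<in>K. norm (d k))\<^sup>2"
    unfolding P_def d by (intro power_mono norm_trig_sum_le) simp
  also have "\<dots> \<le> c * (\<Sum>k\<in>K. (norm (d k))\<^sup>2)"
    using sum_squared_le_sum_of_squares[of "\<lambda>k. norm (d k)" K] by (simp add: c_def mult.commute)
  finally have "V * P \<le> c * (V * (\<Sum>k\<in>K. (norm (d k))\<^sup>2))"
    by (simp add: V_def)
  also have "V * (\<Sum>k\<in>K. (norm (d k))\<^sup>2) = I"
    unfolding I_def V_def d by (rule parseval_torus[OF K(1), symmetric])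
  also have "I \<le> M\<^sup>2 * measure lborel {y \<in> torus. P / (2 * c) \<le> (norm (g y))\<^sup>2}
      + P / (2 * c) * V"
    unfolding I_def V_def measure_torus[symmetric]
    by (rule integral_le_superlevel_measure)
      (use emeasure_torus_finite bound c in \<open>auto simp: P_def intro: power_mono\<close>)
  finally have "V * P \<le> 2 * c * M\<^sup>2 * measure lborel {y \<in> torus. P / (2 * c) \<le> (norm (g y))\<^sup>2}"
    using c by (simp add: algebra_simps)
  then show ?thesis
    by (simp add: V_def P_def c_def)
qed

lemma trig_polys_power_large_values:
  fixes f :: "real^'n::finite \<Rightarrow> complex"
  assumes Q: "finite Q" "Q \<noteq> {}" and f: "f \<in> trig_polys Q"
    and bound: "\<And>y. y \<in> torus \<Longrightarrow> norm (f y) \<le> S"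
  defines "m \<equiv> card Q"
  shows "(2*pi) ^ CARD('n) * norm (f x) ^ (2*m)
      \<le> 2 * 4 ^ m * S ^ (2*m) *
        measure lborel {y \<in> torus. norm (f x) ^ (2*m) \<le> 2 * 4 ^ m * norm (f y) ^ (2*m)}"
proof -
  define K where "K = bounded_sums Q m"
  have K: "finite K" "K \<noteq> {}" and card_K: "card K \<le> 4 ^ m"
    using card_bounded_sums[OF Q(1), of m] zero_in_bounded_sums[of Q m]
    by (auto simp: K_def m_def power_add simp flip: power_mult_distrib)
  have norm_power_sq: "(norm (f y ^ m))\<^sup>2 = norm (f y) ^ (2*m)" for y
    by (simp add: norm_power power_mult[symmetric] mult.commute)
  define A\<^sub>K
    where "A\<^sub>K = {y \<in> torus. norm (f x) ^ (2*m) / (2 * real (card K)) \<le> norm (f y) ^ (2*m)}"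
  define A where "A = {y \<in> torus. norm (f x) ^ (2*m) \<le> 2 * 4 ^ m * norm (f y) ^ (2*m)}"
  have [measurable]: "f \<in> borel_measurable borel"
    by (rule trig_polys_borel_measurable[OF f])
  have "A\<^sub>K \<subseteq> A"
  proof
    fix y assume "y \<in> A\<^sub>K"
    then have "norm (f x) ^ (2*m) \<le> 2 * real (card K) * norm (f y) ^ (2*m)"
      using K by (simp add: A\<^sub>K_def field_simps card_gt_0_iff)
    also have "\<dots> \<le> 2 * 4 ^ m * norm (f y) ^ (2*m)"
      using card_K by (intro mult_right_mono) auto
    finally show "y \<in> A"
      using \<open>y \<in> A\<^sub>K\<close> by (simp add: A\<^sub>K_def A_def)
  qed
  moreover have "A \<in> fmeasurable lborel"
    unfolding A_def by (intro fmeasurable_subset_torus sets_borel_torus_Collect) auto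
  moreover have "A\<^sub>K \<in> sets borel"
    unfolding A\<^sub>K_def by (intro sets_borel_torus_Collect) measurable
  ultimately have measure_A: "measure lborel A\<^sub>K \<le> measure lborel A"
    by (intro measure_mono_fmeasurable) auto
  have "(\<lambda>y. f y ^ m) \<in> trig_polys K"
    unfolding K_def by (rule trig_polys_power[OF Q(1) f])
  from trig_polys_large_values[OF K(1,2) this, of "S ^ m" x]
  have "(2*pi) ^ CARD('n) * norm (f x) ^ (2*m) \<le> 2 * real (card K) * S ^ (2*m) * measure lborel A\<^sub>K"
    using bound
    by (simp add: norm_power_sq A\<^sub>K_def norm_power power_mono power_mult[symmetric] mult.commute)
  also have "\<dots> \<le> 2 * 4 ^ m * S ^ (2*m) * measure lborel A"
    using card_K measure_A by (intro mult_mono) (auto simp: power_mult)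
  finally show ?thesis
    unfolding A_def .
qed

lemma power_bounds_imp_less_8_mult:
  fixes S a b :: real
  assumes "0 < m" "0 \<le> b" "S ^ (2*m) < 4 ^ m * a ^ (2*m)" "a ^ (2*m) \<le> 2 * 4 ^ m * b ^ (2*m)"
  shows "S < 8 * b"
proof -
  have "(2::real) * 16 ^ m \<le> 4 ^ m * 16 ^ m"
    using self_le_power[of "4::real" m] assms(1) by (intro mult_right_mono) auto
  then have "(2::real) * 16 ^ m \<le> 64 ^ m"
    by (simp add: power_mult_distrib[symmetric])
  have "S ^ (2*m) < 4 ^ m * a ^ (2*m)"
    by (fact assms(3))
  also have "\<dots> \<le> 4 ^ m * (2 * 4 ^ m * b ^ (2*m))"
    using assms(4) by (intro mult_left_mono) auto
  also have "\<dots> = 2 * 16 ^ m * b ^ (2*m)"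
    by (simp add: power_mult_distrib[symmetric] mult_ac)
  also have "\<dots> \<le> 64 ^ m * b ^ (2*m)"
    using \<open>2 * 16 ^ m \<le> 64 ^ m\<close> by (intro mult_right_mono) auto
  also have "\<dots> = (8 * b) ^ (2*m)"
    by (simp add: power_mult_distrib power_mult)
  finally show ?thesis
    by (rule power_less_imp_less_base) (use assms(2) in simp)
qed

lemma trig_polys_measure_superlevel_eighth:
  fixes f :: "real^'n::finite \<Rightarrow> complex"
  assumes Q: "finite Q" "Q \<noteq> {}" and f: "f \<in> trig_polys Q"
    and bound: "\<And>y. y \<in> torus \<Longrightarrow> norm (f y) \<le> S"
    and "0 < S" and x: "S / 2 < norm (f x)"
  shows "(2*pi) ^ CARD('n) < 2 * 16 ^ card Q * measure lborel {y \<in> torus. S < 8 * norm (f y)}"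
proof -
  define m where "m = card Q"
  have m: "0 < m"
    using Q by (simp add: m_def card_gt_0_iff)
  define V where "V = (2*pi) ^ CARD('n)"
  define A where "A = {y \<in> torus. norm (f x) ^ (2*m) \<le> 2 * 4 ^ m * norm (f y) ^ (2*m)}"
  define E where "E = {y \<in> torus. S < 8 * norm (f y)}"
  have [measurable]: "f \<in> borel_measurable borel"
    by (rule trig_polys_borel_measurable[OF f])
  have x_large: "S ^ (2*m) < 4 ^ m * norm (f x) ^ (2*m)"
  proof -
    have "(S / 2) ^ (2*m) < norm (f x) ^ (2*m)"
      using x \<open>0 < S\<close> m by (intro power_strict_mono) auto
    moreover have "(S / 2) ^ (2*m) = S ^ (2*m) / 4 ^ m"
      by (simp add: power_divide power_mult)
    ultimately show ?thesis
      by (simp add: divide_less_eq mult.commute)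
  qed
  have "A \<subseteq> E"
    using power_bounds_imp_less_8_mult[OF m _ x_large] by (auto simp: A_def E_def)
  moreover have "A \<in> sets borel"
    unfolding A_def by (intro sets_borel_torus_Collect) measurable
  moreover have "E \<in> fmeasurable lborel"
    unfolding E_def by (intro fmeasurable_subset_torus sets_borel_torus_Collect) auto
  ultimately have measure_A_E: "measure lborel A \<le> measure lborel E"
    by (intro measure_mono_fmeasurable) auto
  have "S ^ (2*m) * V < 4 ^ m * (V * norm (f x) ^ (2*m))"
    using x_large by (simp add: V_def)
  also have "\<dots> \<le> 4 ^ m * (2 * 4 ^ m * S ^ (2*m) * measure lborel A)"
    using trig_polys_power_large_values[OF Q f bound, of x] by (simp add: V_def A_def m_def)
  also have "\<dots> = S ^ (2*m) * (2 * 16 ^ m * measure lborel A)"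
    by (simp add: power_mult_distrib[symmetric] mult_ac)
  finally have "V < 2 * 16 ^ m * measure lborel A"
    using \<open>0 < S\<close> by (simp add: mult_less_cancel_left_pos)
  also have "\<dots> \<le> 2 * 16 ^ m * measure lborel E"
    using measure_A_E by simp
  finally show ?thesis
    by (simp add: V_def E_def m_def)
qed

lemma lmeasurable_subset_torus:
  assumes "B \<in> sets lebesgue" "B \<subseteq> torus"
  shows "B \<in> lmeasurable"
  using bounded_set_imp_lmeasurable[OF bounded_subset[OF bounded_cbox] assms(1)]
    assms(2) torus_subset_cbox by blast

lemma not_subset_small_measure:
  fixes A B :: "(real^'n::finite) set"
  assumes B: "B \<in> sets lebesgue" "B \<subseteq> torus" and small: "c * norm_meas B < 1" and "0 < c"
    and A: "A \<in> sets borel" "(2*pi) ^ CARD('n) \<le> c * measure lborel A"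
  shows "\<not> A \<subseteq> B"
proof (rule measure_less_imp_not_subset)
  show "A \<in> sets lebesgue"
    using A(1) by simp
  show "B \<in> fmeasurable lebesgue"
    using B lmeasurable_subset_torus by blast
  have "c * measure lebesgue B < (2*pi) ^ CARD('n)"
    using small by (simp add: norm_meas_def field_simps)
  then have "c * measure lebesgue B < c * measure lborel A"
    using A(2) by linarith
  then show "measure lebesgue B < measure lebesgue A"
    using \<open>0 < c\<close> A(1) by simp
qed

lemma sup_norm_torus_le_8:
  fixes f :: "real^'n::finite \<Rightarrow> complex"
  assumes Q: "finite Q" "Q \<noteq> {}" and f: "f \<in> trig_polys Q"
    and B: "B \<in> sets lebesgue" "B \<subseteq> torus" and small: "2 * 16 ^ card Q * norm_meas B < 1"
  shows "sup_norm_on torus f \<le> 8 * sup_norm_on (torus - B) f"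
proof -
  define S where "S = sup_norm_on torus f"
  have bdd: "bdd_above ((\<lambda>x. norm (f x)) ` T)" for T
    by (rule trig_polys_bdd_above_norm[OF f])
  have fS: "norm (f y) \<le> S" if "y \<in> torus" for y
    unfolding S_def using that bdd by (rule norm_le_sup_norm_on)
  have [measurable]: "f \<in> borel_measurable borel"
    by (rule trig_polys_borel_measurable[OF f])
  have "(1::real) \<le> 2 * 16 ^ card Q"
    using one_le_power[of "16::real" "card Q"] by linarith
  then have "(2*pi) ^ CARD('n) \<le> 2 * 16 ^ card Q * measure lborel (torus :: (real^'n) set)"
    unfolding measure_torus using mult_right_mono[of 1 "2 * 16 ^ card Q" "(2*pi) ^ CARD('n)"] by simp
  then have "torus - B \<noteq> {}"
    using not_subset_small_measure[OF B small _ torus_borel] by auto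
  then have sup_nonneg: "0 \<le> sup_norm_on (torus - B) f"
    using bdd by (rule sup_norm_on_nonneg)
  show ?thesis
  proof (cases "S > 0")
    case False
    then show ?thesis
      using sup_nonneg by (simp add: S_def)
  next
    case True
    obtain x where "S / 2 < norm (f x)"
      using less_cSUP_iff[OF _ bdd, of torus "S / 2"] zero_in_torus True
      by (auto simp: S_def sup_norm_on_def)
    then have "(2*pi) ^ CARD('n) \<le> 2 * 16 ^ card Q * measure lborel {y \<in> torus. S < 8 * norm (f y)}"
      using trig_polys_measure_superlevel_eighth[OF Q f fS True] by (simp add: less_imp_le)
    moreover have "{y \<in> torus. S < 8 * norm (f y)} \<in> sets borel"
      by (intro sets_borel_torus_Collect) measurable
    ultimately obtain y where y: "y \<in> torus" "y \<notin> B" "S < 8 * norm (f y)"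
      using not_subset_small_measure[OF B small] by fastforce
    have "norm (f y) \<le> sup_norm_on (torus - B) f"
      using y by (intro norm_le_sup_norm_on bdd) simp
    then show ?thesis
      using y(3) by (simp add: S_def)
  qed
qed

theorem theorem5p4:
  shows "\<exists>C::real. C > 0 \<and>
    (\<forall>(Q::(int^'n) set) (B::(real^'n) set) f.
       finite Q \<longrightarrow> Q \<noteq> {} \<longrightarrow>
       B \<in> sets lebesgue \<longrightarrow> B \<subseteq> torus \<longrightarrow>
       norm_meas B \<le> C * 2 powr (- 4 * real (card Q)) * real (card Q) powr (-2) \<longrightarrow>
       f \<in> trig_polys Q \<longrightarrow>
       sup_norm_on torus f \<le> 12 * sup_norm_on (torus - B) f)"
proof (intro exI[of _ "1/4"] conjI allI impI)
  fix Q :: "(int^'n) set" and B :: "(real^'n) set" and f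
  assume Q: "finite Q" "Q \<noteq> {}" and B: "B \<in> sets lebesgue" "B \<subseteq> torus"
    and small: "norm_meas B \<le> 1/4 * 2 powr (- 4 * real (card Q)) * real (card Q) powr (-2)"
    and f: "f \<in> trig_polys Q"
  have "1 \<le> real (card Q)"
    using Q by (simp add: Suc_le_eq card_gt_0_iff)
  then have "real (card Q) powr (-2) \<le> 1"
    using powr_mono[of "-2" 0 "real (card Q)"] by simp
  moreover have "2 powr (- 4 * real (card Q)) = 1 / 16 ^ card Q"
  proof -
    have "2 powr (4 * real (card Q)) = 16 ^ card Q"
      using powr_realpow[of 2 "4 * card Q"] by (simp add: power_mult)
    then show ?thesis
      by (simp add: powr_minus_divide)
  qed
  ultimately have "norm_meas B \<le> 1/4 * (1 / 16 ^ card Q)"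
    using small mult_left_mono[of "real (card Q) powr (-2)" 1 "1/4 * (1 / 16 ^ card Q)"] by simp
  then have "2 * 16 ^ card Q * norm_meas B < 1"
    by (simp add: field_simps)
  then have "sup_norm_on torus f \<le> 8 * sup_norm_on (torus - B) f"
    by (rule sup_norm_torus_le_8[OF Q f B])
  moreover have "0 \<le> sup_norm_on torus f"
    using zero_in_torus trig_polys_bdd_above_norm[OF f] by (intro sup_norm_on_nonneg) auto
  ultimately show "sup_norm_on torus f \<le> 12 * sup_norm_on (torus - B) f"
    by linarith
qed simp

end
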